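(* Let $N\ge1$ be an integer, let $f_1,f_2:\mathbb{Z}_N\to\mathbb{R}_{\ge0}$ and let $K_0\ge1$, $\delta>0$, $\varepsilon>0$. Then there exist $\eta=\eta(K_0,\delta,\varepsilon)>0$ and $\Omega\subset\mathbb{Z}_N$ with $1\in\Omega$ and $|\Omega|$ bounded by a constant depending only on $K_0,\delta,\varepsilon$, such that the following holds. Suppose $\chi=\chi_{\Omega,\eta}:\mathbb{Z}\to\mathbb{R}_{\ge0}$ is a function satisfying: $0\le\chi(n)\le c(|\Omega|)$ for a constant depending only on $|\Omega|$; $\chi(n)=\chi(-n)$ and $\chi(n+N)=\chi(n)$; $\chi(n)\ge1$ for $n\in B(\Omega,\eta)$; $\chi(n)\le(\eta^2/8)^{|\Omega|}$ for $n\notin B(\Omega,2\eta)$; and $\|\chi\|_1:=\frac1N\sum_{n\in\mathbb{Z}_N}\chi(n)\ge(\eta/2)^{|\Omega|}$. Assume (i) $f_2*\chi(t)\ge\delta\|\chi\|_1$ for all integers $t\in(\frac N3,\frac{2N}3)$; (ii) $\sum_{N/3<n<N/2}f_1(n)\ge\delta N$; (iii) $\sum_{\xi\in\mathbb{Z}_N}|\widehat{f_j}(\xi)|^r\le K_0$ for $j\in\{1,2\}$ and $r\in\{3,4\}$. Then $f_1*f_2(n)\ge\frac{\delta^2}{3}$ for all but at most $\varepsilon N$ values of $n\in[0.9N,N]$.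
   Context: For $\Omega\subset\mathbb{Z}_N$ and $\eta\in(0,\frac12)$, the Bohr set is $B(\Omega,\eta)=\{n\in\mathbb{Z}_N:\|\xi n/N\|\le\eta\ \forall\xi\in\Omega\}$, $\|\cdot\|$ the distance to the nearest integer. For $f,g:\mathbb{Z}_N\to\mathbb{C}$: $\hat f(\xi)=\frac1N\sum_{n\in\mathbb{Z}_N}f(n)e(-\xi n/N)$ and $f*g(n)=\frac1N\sum_{k\in\mathbb{Z}_N}f(k)g(n-k)$, with $e(t)=e^{2\pi it}$; $\chi$ is regarded as a function on $\mathbb{Z}_N$ by periodicity, and integers are identified with their residues mod $N$. *)

theory Defs
  imports "HOL-Analysis.Analysis"
begin

text \<open>Z_N is represented by the residues {0..<N} (as integers); functions on Z_N are
 functions int => _ of which only the values on {0..<N} matter; arguments are reduced mod N.\<close>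

definition dist_int :: "real \<Rightarrow> real" where
  "dist_int t = \<bar>t - of_int (round t)\<bar>"

definition bohr :: "nat \<Rightarrow> int set \<Rightarrow> real \<Rightarrow> int set" where
  "bohr N \<Omega> \<eta> = {n \<in> {0..<int N}. \<forall>\<xi>\<in>\<Omega>. dist_int (of_int \<xi> * of_int n / real N) \<le> \<eta>}"

definition fourier :: "nat \<Rightarrow> (int \<Rightarrow> real) \<Rightarrow> int \<Rightarrow> complex" where
  "fourier N f \<xi> = (1 / of_nat N) *
     (\<Sum>n\<in>{0..<int N}. of_real (f n) * cis (- 2 * pi * of_int \<xi> * of_int n / real N))"

definition conv :: "nat \<Rightarrow> (int \<Rightarrow> real) \<Rightarrow> (int \<Rightarrow> real) \<Rightarrow> int \<Rightarrow> real" where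
  "conv N f g n = (1 / real N) * (\<Sum>k\<in>{0..<int N}. f k * g ((n - k) mod int N))"

definition norm1 :: "nat \<Rightarrow> (int \<Rightarrow> real) \<Rightarrow> real" where
  "norm1 N chi = (1 / real N) * (\<Sum>n\<in>{0..<int N}. chi n)"

end

theory Submission
  imports Defs
begin

text \<open>Put \<open>L = \<parallel>\<chi>\<parallel>\<^sub>1\<close> and compare \<open>f\<^sub>1 * f\<^sub>2\<close> with its smoothing \<open>f\<^sub>1 * f\<^sub>2 * \<chi> / L\<close>.
  The Fourier transform of the difference is \<open>f\<^sub>1^ f\<^sub>2^ (1 - \<chi>^ / L)\<close>. Let \<open>\<Omega>\<close> be the set
  where \<open>|f\<^sub>1^|\<close> or \<open>|f\<^sub>2^|\<close> is at least \<open>\<tau>\<close>, together with \<open>1\<close>; by the third moment bound it has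
  at most \<open>2 K\<^sub>0 / \<tau>\<^sup>3 + 1\<close> elements. On \<open>\<Omega>\<close> the factor \<open>1 - \<chi>^ / L\<close> is \<open>O(\<eta>)\<close> because
  \<open>\<chi>\<close> is concentrated on \<open>B(\<Omega>, 2\<eta>)\<close>, where every character in \<open>\<Omega>\<close> is close to 1;
  off \<open>\<Omega>\<close> both \<open>|f\<^sub>j^|\<close> are below \<open>\<tau>\<close>. With the third and fourth moment bounds and
  Parseval, the difference has mean square \<open>O((\<eta>\<^sup>2 + \<tau>) K\<^sub>0)\<close>. On the other hand, by (i) and
  (ii) the smoothing is at least \<open>\<delta>\<^sup>2\<close> on \<open>[0.9N, N]\<close>, so wherever \<open>f\<^sub>1 * f\<^sub>2 < \<delta>\<^sup>2/3\<close> the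
  difference is at least \<open>2\<delta>\<^sup>2/3\<close>, which can happen for at most \<open>\<epsilon>N\<close> values of \<open>n\<close>.\<close>

section \<open>Additive characters of \<open>\<int>\<^sub>N\<close>\<close>

definition zn_char :: "nat \<Rightarrow> int \<Rightarrow> complex" where
  "zn_char N a = cis (2 * pi * of_int a / real N)"

lemma zn_char_add: "zn_char N (a + b) = zn_char N a * zn_char N b"
  by (simp add: zn_char_def cis_mult add_divide_distrib distrib_left)

lemma zn_char_0 [simp]: "zn_char N 0 = 1"
  by (simp add: zn_char_def)

lemma zn_char_uminus: "zn_char N (- a) = cnj (zn_char N a)"
  by (simp add: zn_char_def cis_cnj)

lemma norm_zn_char [simp]: "norm (zn_char N a) = 1"
  by (simp add: zn_char_def)

lemma zn_char_power: "zn_char N (int k * a) = zn_char N a ^ k"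
  by (induction k) (auto simp: distrib_right zn_char_add)

lemma zn_char_mult_N:
  assumes "N \<ge> 1" shows "zn_char N (int N * q) = 1"
proof -
  have "2 * pi * of_int (int N * q) / real N = 2 * pi * of_int q"
    using assms by simp
  then show ?thesis
    unfolding zn_char_def by simp
qed

lemma zn_char_mod:
  assumes "N \<ge> 1" shows "zn_char N (a mod int N) = zn_char N a"
proof -
  have "zn_char N a = zn_char N (a mod int N + int N * (a div int N))"
    by simp
  then show ?thesis
    by (simp only: zn_char_add zn_char_mult_N[OF assms] mult_1_right)
qed

lemma zn_char_neq_1:
  assumes "N \<ge> 1" "a mod int N \<noteq> 0" shows "zn_char N a \<noteq> 1"
proof
  assume "zn_char N a = 1"
  define r where "r = a mod int N"
  have "0 \<le> r" "r < int N"
    using assms(1) unfolding r_def by auto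
  then have r: "0 < r" "r < int N"
    using assms(2) unfolding r_def by auto
  have "cos (2 * pi * of_int r / real N) = 1"
    using \<open>zn_char N a = 1\<close> zn_char_mod[OF assms(1)]
    unfolding r_def zn_char_def by (metis cis.sel(1) one_complex.sel(1))
  then obtain n :: int where "2 * pi * of_int r / real N = of_int n * 2 * pi"
    unfolding cos_one_2pi_int by blast
  then have "2 * pi * of_int r = 2 * pi * (of_int n * real N)"
    using assms(1) by (simp add: field_simps)
  then have "of_int r / real N = of_int n"
    using assms(1) by simp
  moreover have "0 < of_int r / real N" "of_int r / real N < 1"
    using r by auto
  ultimately show False
    by simp
qed

lemma sum_zn_char:
  assumes "N \<ge> 1"
  shows "(\<Sum>\<xi>\<in>{0..<int N}. zn_char N (\<xi> * m)) = (if m mod int N = 0 then of_nat N else 0)"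
proof (cases "m mod int N = 0")
  case True
  then have "zn_char N (\<xi> * m) = 1" for \<xi>
    using zn_char_mod[OF assms, of "\<xi> * m"] by (simp add: mod_mult_right_eq[symmetric])
  then show ?thesis
    using True by simp
next
  case False
  have "{0..<int N} = int ` {..<N}"
    by (simp add: image_int_atLeastLessThan lessThan_atLeast0)
  then have "(\<Sum>\<xi>\<in>{0..<int N}. zn_char N (\<xi> * m)) = (\<Sum>i<N. zn_char N m ^ i)"
    by (simp add: sum.reindex zn_char_power)
  also have "\<dots> = 0"
    using zn_char_neq_1[OF assms False] zn_char_power[of N N m] zn_char_mult_N[OF assms, of m]
    by (simp add: sum_gp_strict)
  finally show ?thesis
    using False by simp
qed

lemma eq_if_mod_eq_dist_less:
  assumes "\<bar>m - n\<bar> < int N" "m mod int N = n mod int N"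
  shows "m = n"
proof -
  have "int N dvd m - n"
    using assms(2) by (simp add: mod_eq_dvd_iff)
  then show ?thesis
    using assms(1) dvd_imp_le_int[of "m - n" "int N"] by (cases "m = n") auto
qed

section \<open>Fourier transform, convolution and Parseval\<close>

lemma fourier_zn_char:
  "fourier N f \<xi> = (1 / of_nat N) * (\<Sum>n\<in>{0..<int N}. of_real (f n) * zn_char N (- (\<xi> * n)))"
  unfolding fourier_def zn_char_def by (simp add: mult_ac)

lemma fourier_diff_divide:
  "fourier N (\<lambda>n. f n - g n / c) \<xi> = fourier N f \<xi> - fourier N g \<xi> / of_real c"
  unfolding fourier_zn_char
  by (simp add: sum_subtractf sum_divide_distrib algebra_simps diff_divide_distrib)

lemma sum_translate_mod:
  assumes "N \<ge> 1"
  shows "(\<Sum>n\<in>{0..<int N}. h ((n - k) mod int N)) = (\<Sum>n\<in>{0..<int N}. h n)"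
  by (rule sum.reindex_bij_witness[of _ "\<lambda>m. (m + k) mod int N" "\<lambda>n. (n - k) mod int N"])
     (use assms in \<open>auto simp: mod_simps\<close>)

lemma conv_mod: "conv N f g (n mod int N) = conv N f g n"
  unfolding conv_def by (simp add: mod_simps)

lemma conv_nonneg:
  assumes "\<forall>n\<in>{0..<int N}. 0 \<le> f n" "\<forall>n. 0 \<le> g n"
  shows "0 \<le> conv N f g n"
proof -
  have "0 \<le> (\<Sum>k\<in>{0..<int N}. f k * g ((n - k) mod int N))"
    using assms by (auto intro!: sum_nonneg)
  then show ?thesis
    unfolding conv_def by simp
qed

lemma fourier_conv:
  assumes "N \<ge> 1"
  shows "fourier N (conv N f g) \<xi> = fourier N f \<xi> * fourier N g \<xi>"
proof -
  let ?R = "{0..<int N}" and ?c = "1 / (of_nat N :: complex)"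
  let ?F = "\<lambda>k. of_real (f k) * zn_char N (- (\<xi> * k))"
  let ?G = "\<lambda>m. of_real (g m) * zn_char N (- (\<xi> * m))"
  have split: "of_real (f k) * of_real (g ((n - k) mod int N)) * zn_char N (- (\<xi> * n))
      = ?F k * ?G ((n - k) mod int N)" for n k
  proof -
    have "zn_char N (- (\<xi> * ((n - k) mod int N))) = zn_char N (- (\<xi> * (n - k)))"
      using zn_char_mod[OF assms] by (metis mod_minus_eq mod_mult_right_eq)
    moreover have "- (\<xi> * n) = - (\<xi> * k) + - (\<xi> * (n - k))"
      by (simp add: algebra_simps)
    ultimately have "zn_char N (- (\<xi> * n))
        = zn_char N (- (\<xi> * k)) * zn_char N (- (\<xi> * ((n - k) mod int N)))"
      by (metis zn_char_add)
    then show ?thesis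
      by (simp add: mult_ac)
  qed
  have "fourier N (conv N f g) \<xi>
      = ?c * (\<Sum>n\<in>?R. \<Sum>k\<in>?R. ?c * (of_real (f k) * of_real (g ((n - k) mod int N)) * zn_char N (- (\<xi> * n))))"
    unfolding fourier_zn_char conv_def by (simp add: sum_distrib_left sum_distrib_right mult_ac)
  also have "\<dots> = ?c * (?c * (\<Sum>k\<in>?R. ?F k * (\<Sum>n\<in>?R. ?G ((n - k) mod int N))))"
    by (subst sum.swap) (simp only: split sum_distrib_left)
  also have "\<dots> = ?c * (?c * (\<Sum>k\<in>?R. ?F k * (\<Sum>n\<in>?R. ?G n)))"
    by (simp only: sum_translate_mod[OF assms, of ?G])
  also have "\<dots> = fourier N f \<xi> * fourier N g \<xi>"
    unfolding fourier_zn_char by (simp only: sum_distrib_right mult_ac)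
  finally show ?thesis .
qed

lemma parseval:
  assumes "N \<ge> 1"
  shows "(\<Sum>\<xi>\<in>{0..<int N}. (norm (fourier N f \<xi>))\<^sup>2) = (1 / real N) * (\<Sum>n\<in>{0..<int N}. (f n)\<^sup>2)"
proof -
  let ?R = "{0..<int N}" and ?c = "1 / (of_nat N :: complex)"
  let ?h = "\<lambda>n m. of_real (f n) * of_real (f m) :: complex"
  have sq: "complex_of_real ((norm (fourier N f \<xi>))\<^sup>2)
      = ?c * ?c * (\<Sum>n\<in>?R. \<Sum>m\<in>?R. ?h n m * zn_char N (\<xi> * (m - n)))" for \<xi>
  proof -
    have e: "zn_char N (- (\<xi> * n)) * zn_char N (\<xi> * m) = zn_char N (\<xi> * (m - n))" for n m
      by (metis zn_char_add add.commute diff_conv_add_uminus right_diff_distrib)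
    have cnj: "cnj (fourier N f \<xi>) = ?c * (\<Sum>m\<in>?R. of_real (f m) * zn_char N (\<xi> * m))"
      unfolding fourier_zn_char by (simp add: zn_char_uminus)
    have "complex_of_real ((norm (fourier N f \<xi>))\<^sup>2) = ?c * ?c *
        ((\<Sum>n\<in>?R. of_real (f n) * zn_char N (- (\<xi> * n))) * (\<Sum>m\<in>?R. of_real (f m) * zn_char N (\<xi> * m)))"
      by (simp only: complex_norm_square cnj) (subst fourier_zn_char, simp only: mult_ac)
    also have "\<dots> = ?c * ?c * (\<Sum>n\<in>?R. \<Sum>m\<in>?R.
        (of_real (f n) * zn_char N (- (\<xi> * n))) * (of_real (f m) * zn_char N (\<xi> * m)))"
      by (simp only: sum_product)
    also have "\<dots> = ?c * ?c * (\<Sum>n\<in>?R. \<Sum>m\<in>?R. ?h n m * zn_char N (\<xi> * (m - n)))"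
      by (simp only: mult_ac e[symmetric])
    finally show ?thesis .
  qed
  have "complex_of_real (\<Sum>\<xi>\<in>?R. (norm (fourier N f \<xi>))\<^sup>2)
      = ?c * ?c * (\<Sum>\<xi>\<in>?R. \<Sum>n\<in>?R. \<Sum>m\<in>?R. ?h n m * zn_char N (\<xi> * (m - n)))"
    unfolding of_real_sum sq by (simp only: sum_distrib_left)
  also have "\<dots> = ?c * ?c * (\<Sum>n\<in>?R. \<Sum>\<xi>\<in>?R. \<Sum>m\<in>?R. ?h n m * zn_char N (\<xi> * (m - n)))"
    by (subst sum.swap) (rule refl)
  also have "\<dots> = ?c * ?c * (\<Sum>n\<in>?R. \<Sum>m\<in>?R. \<Sum>\<xi>\<in>?R. ?h n m * zn_char N (\<xi> * (m - n)))"
    by (intro arg_cong2[where f="(*)"] refl sum.cong sum.swap)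
  also have "\<dots> = ?c * ?c * (\<Sum>n\<in>?R. \<Sum>m\<in>?R. ?h n m * (\<Sum>\<xi>\<in>?R. zn_char N (\<xi> * (m - n))))"
    by (simp only: sum_distrib_left)
  also have "\<dots> = ?c * ?c * (\<Sum>n\<in>?R. \<Sum>m\<in>?R. if m = n then ?h n n * of_nat N else 0)"
  proof -
    have "(m - n) mod int N = 0 \<longleftrightarrow> m = n" if "m \<in> ?R" "n \<in> ?R" for m n
    proof -
      have "(m - n) mod int N = 0 \<longleftrightarrow> m mod int N = n mod int N"
        by (simp add: mod_eq_dvd_iff dvd_eq_mod_eq_0)
      then show ?thesis
        using that eq_if_mod_eq_dist_less[of m n N] by auto
    qed
    then show ?thesis
      by (intro arg_cong2[where f="(*)"] refl sum.cong) (auto simp: sum_zn_char[OF assms])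
  qed
  also have "\<dots> = complex_of_real ((1 / real N) * (\<Sum>n\<in>?R. (f n)\<^sup>2))"
    using assms by (simp add: sum.delta power2_eq_square sum_distrib_left)
  finally show ?thesis
    by (simp only: of_real_eq_iff)
qed

section \<open>Fourier coefficients of a Bohr-set bump\<close>

lemma norm_1_minus_cis: "norm (1 - cis t) \<le> \<bar>t\<bar>"
proof -
  have "(norm (1 - cis t))\<^sup>2 = (1 - cos t)\<^sup>2 + (sin t)\<^sup>2"
    by (simp add: cmod_def)
  also have "\<dots> = 4 * (sin (t / 2))\<^sup>2"
    using cos_double_sin[of "t / 2"] by (simp add: power2_eq_square algebra_simps)
  also have "\<dots> \<le> 4 * (t / 2)\<^sup>2"
    using abs_sin_x_le_abs_x[of "t / 2"] by (simp add: abs_le_square_iff del: abs_divide)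
  also have "\<dots> = \<bar>t\<bar>\<^sup>2"
    by (simp add: power2_eq_square)
  finally show ?thesis
    by (rule power2_le_imp_le) simp
qed

lemma norm_1_minus_zn_char:
  "norm (1 - zn_char N (- (\<xi> * n))) \<le> 2 * pi * dist_int (of_int \<xi> * of_int n / real N)"
proof -
  define x where "x = of_int \<xi> * of_int n / real N"
  have "zn_char N (- (\<xi> * n)) = cis (- 2 * pi * (x - of_int (round x))) * cis (2 * pi * of_int (- round x))"
    unfolding zn_char_def x_def by (simp add: cis_mult algebra_simps)
  also have "cis (2 * pi * of_int (- round x)) = 1"
    by (rule cis_multiple_2pi) simp
  finally have "norm (1 - zn_char N (- (\<xi> * n))) = norm (1 - cis (- 2 * pi * (x - of_int (round x))))"
    by simp
  also have "\<dots> \<le> \<bar>- 2 * pi * (x - of_int (round x))\<bar>"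
    by (rule norm_1_minus_cis)
  also have "\<dots> = 2 * pi * dist_int x"
    unfolding dist_int_def by (simp add: abs_mult)
  finally show ?thesis
    unfolding x_def .
qed

lemma norm_1_minus_zn_char_le_2: "norm (1 - zn_char N a) \<le> 2"
  using norm_triangle_ineq4[of 1 "zn_char N a"] by simp

lemma norm_norm1_minus_fourier_le:
  assumes "\<forall>n. 0 \<le> chi n"
  shows "norm (of_real (norm1 N chi) - fourier N chi \<xi>)
    \<le> (1 / real N) * (\<Sum>n\<in>{0..<int N}. chi n * norm (1 - zn_char N (- (\<xi> * n))))"
proof -
  let ?S = "\<Sum>n\<in>{0..<int N}. of_real (chi n) * (1 - zn_char N (- (\<xi> * n)))"
  have "of_real (norm1 N chi) - fourier N chi \<xi> = (1 / of_nat N) * ?S"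
    unfolding norm1_def fourier_zn_char by (simp add: sum_subtractf algebra_simps)
  then have "norm (of_real (norm1 N chi) - fourier N chi \<xi>) = (1 / real N) * norm ?S"
    by (simp add: norm_mult norm_divide)
  also have "\<dots> \<le> (1 / real N) * (\<Sum>n\<in>{0..<int N}. norm (of_real (chi n) * (1 - zn_char N (- (\<xi> * n)))))"
    by (intro mult_left_mono norm_sum) simp
  also have "\<dots> = (1 / real N) * (\<Sum>n\<in>{0..<int N}. chi n * norm (1 - zn_char N (- (\<xi> * n))))"
    using assms by (simp add: norm_mult)
  finally show ?thesis .
qed

lemma norm_norm1_minus_fourier_le_2norm1:
  assumes "\<forall>n. 0 \<le> chi n"
  shows "norm (of_real (norm1 N chi) - fourier N chi \<xi>) \<le> 2 * norm1 N chi"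
proof -
  have "chi n * norm (1 - zn_char N (- (\<xi> * n))) \<le> 2 * chi n" for n
    using assms norm_1_minus_zn_char_le_2 by (metis mult.commute mult_left_mono)
  then have "(1 / real N) * (\<Sum>n\<in>{0..<int N}. chi n * norm (1 - zn_char N (- (\<xi> * n))))
      \<le> (1 / real N) * (\<Sum>n\<in>{0..<int N}. 2 * chi n)"
    by (intro mult_left_mono sum_mono) auto
  then show ?thesis
    using norm_norm1_minus_fourier_le[OF assms, of N \<xi>]
    unfolding norm1_def by (simp add: sum_distrib_left)
qed

lemma norm_norm1_minus_fourier_le_bohr:
  assumes N: "N \<ge> 1" and chi_nonneg: "\<forall>n. 0 \<le> chi n" and "\<xi> \<in> \<Omega>" "0 \<le> \<theta>" "0 \<le> q"
    and chi_tail: "\<forall>n\<in>{0..<int N}. n \<notin> bohr N \<Omega> \<theta> \<longrightarrow> chi n \<le> q"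
  shows "norm (of_real (norm1 N chi) - fourier N chi \<xi>) \<le> 2 * pi * \<theta> * norm1 N chi + 2 * q"
proof -
  have pointwise: "chi n * norm (1 - zn_char N (- (\<xi> * n))) \<le> 2 * pi * \<theta> * chi n + 2 * q"
    if "n \<in> {0..<int N}" for n
  proof (cases "n \<in> bohr N \<Omega> \<theta>")
    case True
    then have "dist_int (of_int \<xi> * of_int n / real N) \<le> \<theta>"
      using \<open>\<xi> \<in> \<Omega>\<close> unfolding bohr_def by auto
    then have "2 * pi * dist_int (of_int \<xi> * of_int n / real N) \<le> 2 * pi * \<theta>"
      by simp
    then have "norm (1 - zn_char N (- (\<xi> * n))) \<le> 2 * pi * \<theta>"
      using norm_1_minus_zn_char[of N \<xi> n] by linarith
    then have "chi n * norm (1 - zn_char N (- (\<xi> * n))) \<le> chi n * (2 * pi * \<theta>)"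
      using chi_nonneg by (simp add: mult_left_mono)
    then show ?thesis
      using \<open>0 \<le> q\<close> by (simp add: mult_ac)
  next
    case False
    then have "chi n * norm (1 - zn_char N (- (\<xi> * n))) \<le> q * 2"
      using chi_tail chi_nonneg that norm_1_minus_zn_char_le_2 \<open>0 \<le> q\<close> by (intro mult_mono) auto
    moreover have "0 \<le> 2 * pi * \<theta> * chi n"
      using chi_nonneg \<open>0 \<le> \<theta>\<close> by simp
    ultimately show ?thesis
      by linarith
  qed
  have "norm (of_real (norm1 N chi) - fourier N chi \<xi>)
      \<le> (1 / real N) * (\<Sum>n\<in>{0..<int N}. chi n * norm (1 - zn_char N (- (\<xi> * n))))"
    by (rule norm_norm1_minus_fourier_le[OF chi_nonneg])
  also have "\<dots> \<le> (1 / real N) * (\<Sum>n\<in>{0..<int N}. 2 * pi * \<theta> * chi n + 2 * q)"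
    by (intro mult_left_mono sum_mono pointwise) auto
  also have "\<dots> = 2 * pi * \<theta> * norm1 N chi + 2 * q"
    unfolding norm1_def using N by (simp add: sum.distrib sum_distrib_left field_simps)
  finally show ?thesis .
qed

text \<open>The mass lower bound beats the tail bound because \<open>(\<eta>\<^sup>2/8)\<^sup>k = (\<eta>/2)\<^sup>k (\<eta>/4)\<^sup>k\<close>.\<close>

lemma norm_norm1_minus_fourier_le_bump:
  assumes N: "N \<ge> 1" and chi_nonneg: "\<forall>n. 0 \<le> chi n" and "finite \<Omega>" "\<xi> \<in> \<Omega>"
    and \<eta>: "0 < \<eta>" "\<eta> \<le> 1/4"
    and chi_tail: "\<forall>n. n mod int N \<notin> bohr N \<Omega> (2 * \<eta>) \<longrightarrow> chi n \<le> (\<eta>\<^sup>2 / 8) ^ card \<Omega>"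
    and chi_mass: "(\<eta> / 2) ^ card \<Omega> \<le> norm1 N chi"
  shows "norm (of_real (norm1 N chi) - fourier N chi \<xi>) \<le> 17 * \<eta> * norm1 N chi"
proof -
  define L where "L = norm1 N chi"
  define k where "k = card \<Omega>"
  have "k \<ge> 1"
    using \<open>finite \<Omega>\<close> \<open>\<xi> \<in> \<Omega>\<close> unfolding k_def by (metis One_nat_def Suc_leI card_gt_0_iff empty_iff)
  then have "(\<eta> / 4) ^ k \<le> \<eta> / 4"
    using power_decreasing[of 1 k "\<eta> / 4"] \<eta> by simp
  have "0 \<le> L"
    using chi_mass \<eta> zero_le_power[of "\<eta> / 2" k] unfolding L_def k_def by linarith
  have "(\<eta>\<^sup>2 / 8) ^ k = (\<eta> / 2) ^ k * (\<eta> / 4) ^ k"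
    by (simp add: power_mult_distrib[symmetric] power2_eq_square)
  also have "\<dots> \<le> L * (\<eta> / 4)"
    using chi_mass \<open>(\<eta> / 4) ^ k \<le> \<eta> / 4\<close> \<open>0 \<le> L\<close> \<eta> unfolding L_def k_def
    by (intro mult_mono) auto
  finally have q: "2 * (\<eta>\<^sup>2 / 8) ^ k \<le> \<eta> * L / 2"
    by (simp add: mult.commute)
  have "0 \<le> \<eta> * L"
    using \<open>0 \<le> L\<close> \<eta> by simp
  then have "pi * (\<eta> * L) \<le> 4 * (\<eta> * L)"
    using pi_less_4 by (intro mult_right_mono) auto
  moreover have "norm (of_real L - fourier N chi \<xi>) \<le> 2 * pi * (2 * \<eta>) * L + 2 * (\<eta>\<^sup>2 / 8) ^ k"
    unfolding L_def k_def using chi_tail \<eta>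
    by (intro norm_norm1_minus_fourier_le_bohr[OF N chi_nonneg \<open>\<xi> \<in> \<Omega>\<close>]) auto
  moreover have "2 * pi * (2 * \<eta>) * L = 4 * (pi * (\<eta> * L))" "17 * \<eta> * L = 17 * (\<eta> * L)"
    by (simp_all add: algebra_simps)
  ultimately show ?thesis
    using q \<open>0 \<le> \<eta> * L\<close> unfolding L_def by linarith
qed

section \<open>The exceptional set\<close>

lemma mult_sq_le_quartic_cubic:
  fixes a b w \<eta> \<tau> :: real
  assumes "0 \<le> a" "0 \<le> b" "0 \<le> w" "0 \<le> \<tau>"
    and "w \<le> 17 * \<eta> \<or> (w \<le> 2 \<and> a < \<tau> \<and> b < \<tau>)"
  shows "a\<^sup>2 * b\<^sup>2 * w\<^sup>2 \<le> 289 / 2 * \<eta>\<^sup>2 * (a ^ 4 + b ^ 4) + 2 * \<tau> * (a ^ 3 + b ^ 3)"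
proof -
  have amgm: "a\<^sup>2 * b\<^sup>2 \<le> (a ^ 4 + b ^ 4) / 2"
    using sum_squares_ge_zero[of "a\<^sup>2 - b\<^sup>2" 0] by (simp add: power2_eq_square algebra_simps power4_eq_xxxx)
  have "0 \<le> \<eta>\<^sup>2 * (a ^ 4 + b ^ 4)" "0 \<le> \<tau> * (a ^ 3 + b ^ 3)"
    using assms by simp_all
  from assms(5) show ?thesis
  proof
    assume "w \<le> 17 * \<eta>"
    then have "w\<^sup>2 \<le> 289 * \<eta>\<^sup>2"
      using assms power_mono[of w "17 * \<eta>" 2] by (simp add: power_mult_distrib)
    then have "a\<^sup>2 * b\<^sup>2 * w\<^sup>2 \<le> (a ^ 4 + b ^ 4) / 2 * (289 * \<eta>\<^sup>2)"
      by (intro mult_mono amgm) simp_all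
    also have "\<dots> = 289 / 2 * \<eta>\<^sup>2 * (a ^ 4 + b ^ 4)"
      by (simp add: field_simps)
    finally show ?thesis
      using \<open>0 \<le> \<tau> * (a ^ 3 + b ^ 3)\<close> by linarith
  next
    assume small: "w \<le> 2 \<and> a < \<tau> \<and> b < \<tau>"
    then have "w\<^sup>2 \<le> 4"
      using assms power_mono[of w 2 2] by simp
    then have "a\<^sup>2 * b\<^sup>2 * w\<^sup>2 \<le> (a ^ 4 + b ^ 4) / 2 * 4"
      by (intro mult_mono amgm) simp_all
    moreover have "a ^ 4 \<le> \<tau> * a ^ 3" "b ^ 4 \<le> \<tau> * b ^ 3"
      using assms small mult_right_mono[of a \<tau> "a ^ 3"] mult_right_mono[of b \<tau> "b ^ 3"]
      by (simp_all add: power_Suc[symmetric] mult.commute)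
    moreover have "(a ^ 4 + b ^ 4) / 2 * 4 = 2 * a ^ 4 + 2 * b ^ 4"
      "2 * \<tau> * (a ^ 3 + b ^ 3) = 2 * (\<tau> * a ^ 3) + 2 * (\<tau> * b ^ 3)"
      by (simp_all add: algebra_simps)
    ultimately show ?thesis
      using \<open>0 \<le> \<eta>\<^sup>2 * (a ^ 4 + b ^ 4)\<close> by linarith
  qed
qed

lemma norm_1_minus_divide_of_real:
  fixes z :: complex and c :: real
  assumes "0 < c"
  shows "norm (1 - z / of_real c) = norm (of_real c - z) / c"
proof -
  have "1 - z / of_real c = (of_real c - z) / of_real c"
    using assms by (simp add: field_simps)
  then show ?thesis
    using assms by (simp add: norm_divide)
qed

lemma sum_sq_norm_fourier_defect_le:
  fixes f1 f2 chi :: "int \<Rightarrow> real"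
  assumes N: "N \<ge> 1" and chi_nonneg: "\<forall>n. 0 \<le> chi n" and \<Omega>: "\<Omega> \<subseteq> {0..<int N}"
    and small_off_\<Omega>: "\<forall>\<xi>\<in>{0..<int N} - \<Omega>. norm (fourier N f1 \<xi>) < \<tau> \<and> norm (fourier N f2 \<xi>) < \<tau>"
    and chi_tail: "\<forall>n. n mod int N \<notin> bohr N \<Omega> (2 * \<eta>) \<longrightarrow> chi n \<le> (\<eta>\<^sup>2 / 8) ^ card \<Omega>"
    and chi_mass: "(\<eta> / 2) ^ card \<Omega> \<le> norm1 N chi"
    and moments: "\<forall>f\<in>{f1, f2}. \<forall>r\<in>{3::nat, 4}. (\<Sum>\<xi>\<in>{0..<int N}. norm (fourier N f \<xi>) ^ r) \<le> K0"
    and \<eta>: "0 < \<eta>" "\<eta> \<le> 1/4" and \<tau>: "0 < \<tau>"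
  shows "(\<Sum>\<xi>\<in>{0..<int N}. (norm (fourier N f1 \<xi> * fourier N f2 \<xi> *
      (1 - fourier N chi \<xi> / of_real (norm1 N chi))))\<^sup>2) \<le> 289 * \<eta>\<^sup>2 * K0 + 4 * \<tau> * K0"
proof -
  let ?R = "{0..<int N}"
  let ?a = "\<lambda>\<xi>. norm (fourier N f1 \<xi>)" and ?b = "\<lambda>\<xi>. norm (fourier N f2 \<xi>)"
  define L where "L = norm1 N chi"
  define w where "w \<xi> = norm (1 - fourier N chi \<xi> / of_real L)" for \<xi>
  have "0 < (\<eta> / 2) ^ card \<Omega>"
    using \<eta> by simp
  then have "0 < L"
    using chi_mass unfolding L_def by linarith
  then have w: "w \<xi> = norm (of_real L - fourier N chi \<xi>) / L" for \<xi>
    unfolding w_def by (rule norm_1_minus_divide_of_real)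
  have pointwise: "(norm (fourier N f1 \<xi> * fourier N f2 \<xi> * (1 - fourier N chi \<xi> / of_real L)))\<^sup>2
      \<le> 289 / 2 * \<eta>\<^sup>2 * (?a \<xi> ^ 4 + ?b \<xi> ^ 4) + 2 * \<tau> * (?a \<xi> ^ 3 + ?b \<xi> ^ 3)"
    if "\<xi> \<in> ?R" for \<xi>
  proof -
    have "w \<xi> \<le> 17 * \<eta> \<or> (w \<xi> \<le> 2 \<and> ?a \<xi> < \<tau> \<and> ?b \<xi> < \<tau>)"
    proof (cases "\<xi> \<in> \<Omega>")
      case True
      have "finite \<Omega>"
        using \<Omega> finite_subset by blast
      with True show ?thesis
        using norm_norm1_minus_fourier_le_bump[OF N chi_nonneg _ _ \<eta> chi_tail chi_mass] \<open>0 < L\<close>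
        unfolding w L_def by (simp add: divide_le_eq)
    next
      case False
      then show ?thesis
        using norm_norm1_minus_fourier_le_2norm1[OF chi_nonneg] \<open>0 < L\<close> small_off_\<Omega> that
        unfolding w L_def by (simp add: divide_le_eq)
    qed
    then have "(?a \<xi>)\<^sup>2 * (?b \<xi>)\<^sup>2 * (w \<xi>)\<^sup>2
        \<le> 289 / 2 * \<eta>\<^sup>2 * (?a \<xi> ^ 4 + ?b \<xi> ^ 4) + 2 * \<tau> * (?a \<xi> ^ 3 + ?b \<xi> ^ 3)"
      using \<tau> unfolding w_def by (intro mult_sq_le_quartic_cubic) auto
    then show ?thesis
      unfolding w_def by (simp add: norm_mult power_mult_distrib)
  qed
  have "(\<Sum>\<xi>\<in>?R. (norm (fourier N f1 \<xi> * fourier N f2 \<xi> * (1 - fourier N chi \<xi> / of_real L)))\<^sup>2)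
      \<le> (\<Sum>\<xi>\<in>?R. 289 / 2 * \<eta>\<^sup>2 * (?a \<xi> ^ 4 + ?b \<xi> ^ 4) + 2 * \<tau> * (?a \<xi> ^ 3 + ?b \<xi> ^ 3))"
    by (rule sum_mono) (rule pointwise)
  also have "\<dots> = 289 / 2 * \<eta>\<^sup>2 * ((\<Sum>\<xi>\<in>?R. ?a \<xi> ^ 4) + (\<Sum>\<xi>\<in>?R. ?b \<xi> ^ 4))
      + 2 * \<tau> * ((\<Sum>\<xi>\<in>?R. ?a \<xi> ^ 3) + (\<Sum>\<xi>\<in>?R. ?b \<xi> ^ 3))"
    by (simp only: distrib_left sum.distrib sum_distrib_left)
  also have "\<dots> \<le> 289 / 2 * \<eta>\<^sup>2 * (K0 + K0) + 2 * \<tau> * (K0 + K0)"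
    using moments \<tau> by (intro add_mono mult_left_mono) auto
  finally show ?thesis
    unfolding L_def by (simp add: algebra_simps)
qed

lemma conv_ge_of_sum_ge:
  assumes N: "N \<ge> 1" and "\<forall>k\<in>{0..<int N}. 0 \<le> f k" "\<forall>m. 0 \<le> g m" "0 \<le> b"
    and "A \<subseteq> {0..<int N}" "\<forall>k\<in>A. b \<le> g ((n - k) mod int N)" "a * real N \<le> (\<Sum>k\<in>A. f k)"
  shows "a * b \<le> conv N f g n"
proof -
  have "a * real N * b \<le> (\<Sum>k\<in>A. f k) * b"
    using assms by (intro mult_right_mono) auto
  also have "\<dots> \<le> (\<Sum>k\<in>A. f k * g ((n - k) mod int N))"
    unfolding sum_distrib_right using assms by (intro sum_mono mult_left_mono) auto
  also have "\<dots> \<le> (\<Sum>k\<in>{0..<int N}. f k * g ((n - k) mod int N))"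
    using assms by (intro sum_mono2) auto
  finally show ?thesis
    unfolding conv_def using N by (simp add: field_simps)
qed

lemma smoothed_conv_ge:
  fixes f1 f2 chi :: "int \<Rightarrow> real"
  assumes N: "N \<ge> 1" and f_nonneg: "\<forall>n\<in>{0..<int N}. 0 \<le> f1 n \<and> 0 \<le> f2 n"
    and chi_nonneg: "\<forall>n. 0 \<le> chi n" and "0 \<le> \<delta>"
    and conv_f2_chi: "\<forall>t::int. real N / 3 < of_int t \<and> of_int t < 2 * real N / 3 \<longrightarrow>
        conv N f2 chi t \<ge> \<delta> * norm1 N chi"
    and sum_f1: "(\<Sum>n\<in>{n::int. real N / 3 < of_int n \<and> of_int n < real N / 2}. f1 n) \<ge> \<delta> * real N"
    and n: "0.9 * real N \<le> of_int n" "n \<le> int N"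
  shows "\<delta>\<^sup>2 * norm1 N chi \<le> conv N f1 (conv N f2 chi) n"
proof -
  let ?A = "{n::int. real N / 3 < of_int n \<and> of_int n < real N / 2}"
  have "\<delta> * norm1 N chi \<le> conv N f2 chi ((n - k) mod int N)" if "k \<in> ?A" for k
  proof -
    have "real N / 3 < of_int k" "of_int k < real N / 2"
      using that by auto
    then have "0 \<le> n - k" "n - k < int N"
      using n by linarith+
    then have "(n - k) mod int N = n - k"
      by simp
    moreover have "real N / 3 < of_int (n - k)" "of_int (n - k) < 2 * real N / 3"
      using that n by auto
    ultimately show ?thesis
      using conv_f2_chi by auto
  qed
  moreover have "0 \<le> \<delta> * norm1 N chi"
    using chi_nonneg \<open>0 \<le> \<delta>\<close> unfolding norm1_def by (simp add: sum_nonneg)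
  moreover have "\<forall>m. 0 \<le> conv N f2 chi m"
    using f_nonneg chi_nonneg by (auto intro: conv_nonneg)
  ultimately have "\<delta> * (\<delta> * norm1 N chi) \<le> conv N f1 (conv N f2 chi) n"
    using N f_nonneg sum_f1 by (intro conv_ge_of_sum_ge[where A = ?A]) auto
  then show ?thesis
    by (simp add: power2_eq_square mult_ac)
qed

lemma inj_on_mod_greaterThanAtMost: "inj_on (\<lambda>n. n mod int N) {a<..a + int N}"
  by (rule inj_onI, rule eq_if_mod_eq_dist_less) auto

lemma card_mult_le_sum_mod:
  assumes N: "N \<ge> 1" and g_nonneg: "\<forall>n\<in>{0..<int N}. 0 \<le> g n"
    and inj: "inj_on (\<lambda>n. n mod int N) B" and large: "\<forall>n\<in>B. c \<le> g (n mod int N)"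
  shows "real (card B) * c \<le> (\<Sum>n\<in>{0..<int N}. g n)"
proof -
  let ?r = "\<lambda>n. n mod int N"
  have "real (card B) * c = real (card (?r ` B)) * c"
    using card_image[OF inj] by simp
  also have "\<dots> \<le> (\<Sum>m\<in>?r ` B. g m)"
    using large by (intro sum_bounded_below) auto
  also have "\<dots> \<le> (\<Sum>n\<in>{0..<int N}. g n)"
    using N g_nonneg by (intro sum_mono2) auto
  finally show ?thesis .
qed

lemma card_small_conv_le:
  fixes f1 f2 chi :: "int \<Rightarrow> real"
  assumes N: "N \<ge> 1" and f_nonneg: "\<forall>n\<in>{0..<int N}. 0 \<le> f1 n \<and> 0 \<le> f2 n"
    and chi_nonneg: "\<forall>n. 0 \<le> chi n" and \<Omega>: "\<Omega> \<subseteq> {0..<int N}"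
    and small_off_\<Omega>: "\<forall>\<xi>\<in>{0..<int N} - \<Omega>. norm (fourier N f1 \<xi>) < \<tau> \<and> norm (fourier N f2 \<xi>) < \<tau>"
    and chi_tail: "\<forall>n. n mod int N \<notin> bohr N \<Omega> (2 * \<eta>) \<longrightarrow> chi n \<le> (\<eta>\<^sup>2 / 8) ^ card \<Omega>"
    and chi_mass: "(\<eta> / 2) ^ card \<Omega> \<le> norm1 N chi"
    and conv_f2_chi: "\<forall>t::int. real N / 3 < of_int t \<and> of_int t < 2 * real N / 3 \<longrightarrow>
        conv N f2 chi t \<ge> \<delta> * norm1 N chi"
    and sum_f1: "(\<Sum>n\<in>{n::int. real N / 3 < of_int n \<and> of_int n < real N / 2}. f1 n) \<ge> \<delta> * real N"
    and moments: "\<forall>f\<in>{f1, f2}. \<forall>r\<in>{3::nat, 4}. (\<Sum>\<xi>\<in>{0..<int N}. norm (fourier N f \<xi>) ^ r) \<le> K0"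
    and \<eta>: "0 < \<eta>" "\<eta> \<le> 1/4" and \<tau>: "0 < \<tau>" and \<delta>: "0 < \<delta>"
    and small: "289 * \<eta>\<^sup>2 * K0 + 4 * \<tau> * K0 \<le> 4 * \<delta> ^ 4 * \<epsilon> / 9"
  shows "real (card {n::int. 0.9 * real N \<le> of_int n \<and> n \<le> int N \<and> conv N f1 f2 n < \<delta>\<^sup>2 / 3})
    \<le> \<epsilon> * real N"
proof -
  let ?R = "{0..<int N}"
  define L where "L = norm1 N chi"
  define D where "D n = conv N f1 f2 n - conv N f1 (conv N f2 chi) n / L" for n
  define B where "B = {n::int. 0.9 * real N \<le> of_int n \<and> n \<le> int N \<and> conv N f1 f2 n < \<delta>\<^sup>2 / 3}"
  have "0 < (\<eta> / 2) ^ card \<Omega>"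
    using \<eta> by simp
  then have "0 < L"
    using chi_mass unfolding L_def by linarith
  have "fourier N D \<xi> = fourier N f1 \<xi> * fourier N f2 \<xi> * (1 - fourier N chi \<xi> / of_real L)" for \<xi>
    unfolding D_def fourier_diff_divide fourier_conv[OF N] using \<open>0 < L\<close> by (simp add: field_simps)
  then have "(\<Sum>\<xi>\<in>?R. (norm (fourier N D \<xi>))\<^sup>2) \<le> 4 * \<delta> ^ 4 * \<epsilon> / 9"
    using sum_sq_norm_fourier_defect_le[OF N chi_nonneg \<Omega> small_off_\<Omega> chi_tail chi_mass moments \<eta> \<tau>] small
    unfolding L_def by simp
  then have upper: "(\<Sum>n\<in>?R. (D n)\<^sup>2) \<le> real N * (4 * \<delta> ^ 4 * \<epsilon> / 9)"
    using parseval[OF N, of D] N by (simp add: field_simps)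
  have "4 * \<delta> ^ 4 / 9 \<le> (D (n mod int N))\<^sup>2" if "n \<in> B" for n
  proof -
    have "\<delta>\<^sup>2 * L \<le> conv N f1 (conv N f2 chi) n"
      using that smoothed_conv_ge[OF N f_nonneg chi_nonneg _ conv_f2_chi sum_f1] \<delta>
      unfolding B_def L_def by auto
    then have "\<delta>\<^sup>2 \<le> conv N f1 (conv N f2 chi) n / L"
      using \<open>0 < L\<close> by (simp add: le_divide_eq)
    moreover have "conv N f1 f2 n < \<delta>\<^sup>2 / 3"
      using that unfolding B_def by auto
    ultimately have "2 * \<delta>\<^sup>2 / 3 \<le> - D n"
      unfolding D_def by linarith
    then have "(2 * \<delta>\<^sup>2 / 3)\<^sup>2 \<le> (D n)\<^sup>2"
      by (metis power2_minus power_mono zero_le_divide_iff zero_le_mult_iff zero_le_numeral zero_le_power2)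
    moreover have "D (n mod int N) = D n"
      unfolding D_def by (simp add: conv_mod)
    ultimately show ?thesis
      by (simp add: power2_eq_square power4_eq_xxxx)
  qed
  moreover have "inj_on (\<lambda>n. n mod int N) B"
  proof (rule inj_on_subset[OF inj_on_mod_greaterThanAtMost[of N 0]])
    show "B \<subseteq> {0<..0 + int N}"
      using N unfolding B_def by auto
  qed
  ultimately have "real (card B) * (4 * \<delta> ^ 4 / 9) \<le> (\<Sum>n\<in>?R. (D n)\<^sup>2)"
    using N by (intro card_mult_le_sum_mod) auto
  with upper have "real (card B) * (4 * \<delta> ^ 4 / 9) \<le> (\<epsilon> * real N) * (4 * \<delta> ^ 4 / 9)"
    by (simp add: field_simps)
  then show ?thesis
    using \<delta> unfolding B_def by (simp add: mult_le_cancel_right)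
qed

section \<open>Choice of the frequency set and of the parameters\<close>

lemma card_level_set_mult_power_le_sum:
  fixes F :: "'a \<Rightarrow> real"
  assumes "finite A" "\<forall>x\<in>A. 0 \<le> F x" "0 \<le> \<tau>"
  shows "real (card {x\<in>A. \<tau> \<le> F x}) * \<tau> ^ r \<le> (\<Sum>x\<in>A. F x ^ r)"
proof -
  have "real (card {x\<in>A. \<tau> \<le> F x}) * \<tau> ^ r \<le> (\<Sum>x\<in>{x\<in>A. \<tau> \<le> F x}. F x ^ r)"
    using assms by (intro sum_bounded_below power_mono) auto
  also have "\<dots> \<le> (\<Sum>x\<in>A. F x ^ r)"
    using assms by (intro sum_mono2) auto
  finally show ?thesis .
qed

text \<open>The moment bounds are only available once \<open>\<chi>\<close> is given, so when they fail the trivial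
  set \<open>{1}\<close> is used.\<close>

lemma exists_large_spectrum_cover:
  fixes f g :: "int \<Rightarrow> real"
  assumes N: "N \<ge> 1" and \<tau>: "0 < \<tau>"
  shows "\<exists>\<Omega>. \<Omega> \<subseteq> {0..<int N} \<and> 1 mod int N \<in> \<Omega> \<and> card \<Omega> \<le> nat \<lceil>2 * K / \<tau> ^ 3\<rceil> + 1 \<and>
    ((\<forall>h\<in>{f, g}. \<forall>r\<in>{3::nat, 4}. (\<Sum>\<xi>\<in>{0..<int N}. norm (fourier N h \<xi>) ^ r) \<le> K) \<longrightarrow>
      (\<forall>\<xi>\<in>{0..<int N} - \<Omega>. norm (fourier N f \<xi>) < \<tau> \<and> norm (fourier N g \<xi>) < \<tau>))"
proof (cases "\<forall>h\<in>{f, g}. \<forall>r\<in>{3::nat, 4}. (\<Sum>\<xi>\<in>{0..<int N}. norm (fourier N h \<xi>) ^ r) \<le> K")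
  case False
  then show ?thesis
    using N by (intro exI[of _ "{1 mod int N}"]) auto
next
  case True
  define S where "S h = {\<xi>\<in>{0..<int N}. \<tau> \<le> norm (fourier N h \<xi>)}" for h
  have "real (card (S h)) * \<tau> ^ 3 \<le> K" if "h \<in> {f, g}" for h
  proof -
    have "real (card (S h)) * \<tau> ^ 3 \<le> (\<Sum>\<xi>\<in>{0..<int N}. norm (fourier N h \<xi>) ^ 3)"
      unfolding S_def using \<tau> by (intro card_level_set_mult_power_le_sum) auto
    also have "\<dots> \<le> K"
      using True that by blast
    finally show ?thesis .
  qed
  then have "real (card (S f)) \<le> K / \<tau> ^ 3" "real (card (S g)) \<le> K / \<tau> ^ 3"
    using \<tau> by (simp_all add: field_simps)
  moreover have "card (S f \<union> S g \<union> {1 mod int N}) \<le> card (S f) + card (S g) + 1"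
    using card_Un_le[of "S f \<union> S g" "{1 mod int N}"] card_Un_le[of "S f" "S g"] by simp
  ultimately have "card (S f \<union> S g \<union> {1 mod int N}) \<le> nat \<lceil>2 * K / \<tau> ^ 3\<rceil> + 1"
    by linarith
  then show ?thesis
    using True N by (intro exI[of _ "S f \<union> S g \<union> {1 mod int N}"]) (auto simp: S_def)
qed

lemma exists_smoothing_parameters:
  fixes K0 \<delta> \<epsilon> :: real
  assumes K0: "K0 \<ge> 1" and \<delta>: "0 < \<delta>" and \<epsilon>: "0 < \<epsilon>"
  shows "\<exists>\<eta> \<tau>. 0 < \<eta> \<and> \<eta> \<le> 1/4 \<and> 0 < \<tau> \<and> 289 * \<eta>\<^sup>2 * K0 + 4 * \<tau> * K0 \<le> 4 * \<delta> ^ 4 * \<epsilon> / 9"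
proof (intro exI conjI)
  define \<eta> where "\<eta> = min (1/4) (\<delta>\<^sup>2 * sqrt \<epsilon> / (40 * K0))"
  define \<tau> where "\<tau> = \<delta> ^ 4 * \<epsilon> / (18 * K0)"
  show "0 < \<eta>" "\<eta> \<le> 1/4" "0 < \<tau>"
    unfolding \<eta>_def \<tau>_def using assms by auto
  have "\<eta>\<^sup>2 \<le> (\<delta>\<^sup>2 * sqrt \<epsilon> / (40 * K0))\<^sup>2"
    using \<open>0 < \<eta>\<close> unfolding \<eta>_def by (intro power_mono) auto
  also have "\<dots> = \<delta> ^ 4 * \<epsilon> / (1600 * K0\<^sup>2)"
    using \<epsilon> by (simp add: power_mult_distrib power_divide flip: power_mult)
  finally have "\<eta>\<^sup>2 * K0 \<le> \<delta> ^ 4 * \<epsilon> / (1600 * K0)"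
    using K0 by (simp add: field_simps power2_eq_square)
  also have "\<dots> \<le> \<delta> ^ 4 * \<epsilon> / 1600"
    using K0 \<delta> \<epsilon> by (intro divide_left_mono) auto
  moreover have "4 * \<tau> * K0 = 2 / 9 * (\<delta> ^ 4 * \<epsilon>)"
    unfolding \<tau>_def using K0 by simp
  moreover have "0 \<le> \<delta> ^ 4 * \<epsilon>" "289 * \<eta>\<^sup>2 * K0 = 289 * (\<eta>\<^sup>2 * K0)"
    using \<delta> \<epsilon> by simp_all
  ultimately show "289 * \<eta>\<^sup>2 * K0 + 4 * \<tau> * K0 \<le> 4 * \<delta> ^ 4 * \<epsilon> / 9"
    by linarith
qed

lemma proposition1_for_parameters:
  fixes c :: "nat \<Rightarrow> real" and f1 f2 :: "int \<Rightarrow> real"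
  assumes N: "N \<ge> 1" and f_nonneg: "\<forall>n\<in>{0..<int N}. 0 \<le> f1 n \<and> 0 \<le> f2 n"
    and \<eta>: "0 < \<eta>" "\<eta> \<le> 1/4" and \<tau>: "0 < \<tau>" and \<delta>: "0 < \<delta>"
    and small: "289 * \<eta>\<^sup>2 * K0 + 4 * \<tau> * K0 \<le> 4 * \<delta> ^ 4 * \<epsilon> / 9"
  shows "\<exists>\<Omega>. \<Omega> \<subseteq> {0..<int N} \<and> 1 mod int N \<in> \<Omega> \<and> card \<Omega> \<le> nat \<lceil>2 * K0 / \<tau> ^ 3\<rceil> + 1 \<and>
        (\<forall>chi::int \<Rightarrow> real.
          (\<forall>n. 0 \<le> chi n \<and> chi n \<le> c (card \<Omega>)) \<longrightarrow>
          (\<forall>n. chi n = chi (- n)) \<longrightarrow>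
          (\<forall>n. chi (n + int N) = chi n) \<longrightarrow>
          (\<forall>n. n mod int N \<in> bohr N \<Omega> \<eta> \<longrightarrow> chi n \<ge> 1) \<longrightarrow>
          (\<forall>n. n mod int N \<notin> bohr N \<Omega> (2 * \<eta>) \<longrightarrow> chi n \<le> (\<eta>\<^sup>2 / 8) ^ card \<Omega>) \<longrightarrow>
          norm1 N chi \<ge> (\<eta> / 2) ^ card \<Omega> \<longrightarrow>
          (\<forall>t::int. real N / 3 < of_int t \<and> of_int t < 2 * real N / 3 \<longrightarrow>
              conv N f2 chi t \<ge> \<delta> * norm1 N chi) \<longrightarrow>
          (\<Sum>n\<in>{n::int. real N / 3 < of_int n \<and> of_int n < real N / 2}. f1 n) \<ge> \<delta> * real N \<longrightarrow>
          (\<forall>f\<in>{f1, f2}. \<forall>r\<in>{3::nat, 4}.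
              (\<Sum>\<xi>\<in>{0..<int N}. norm (fourier N f \<xi>) ^ r) \<le> K0) \<longrightarrow>
          real (card {n::int. 0.9 * real N \<le> of_int n \<and> n \<le> int N \<and>
                          conv N f1 f2 n < \<delta>\<^sup>2 / 3}) \<le> \<epsilon> * real N)"
proof -
  obtain \<Omega> where \<Omega>: "\<Omega> \<subseteq> {0..<int N}" "1 mod int N \<in> \<Omega>" "card \<Omega> \<le> nat \<lceil>2 * K0 / \<tau> ^ 3\<rceil> + 1"
    and small_off_\<Omega>: "(\<forall>f\<in>{f1, f2}. \<forall>r\<in>{3::nat, 4}. (\<Sum>\<xi>\<in>{0..<int N}. norm (fourier N f \<xi>) ^ r) \<le> K0) \<longrightarrow>
      (\<forall>\<xi>\<in>{0..<int N} - \<Omega>. norm (fourier N f1 \<xi>) < \<tau> \<and> norm (fourier N f2 \<xi>) < \<tau>)"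
    using exists_large_spectrum_cover[OF N \<tau>, where K = K0 and f = f1 and g = f2] by blast
  show ?thesis
    using \<Omega> small_off_\<Omega>
    by (intro exI[of _ \<Omega>] conjI allI impI card_small_conv_le[OF N f_nonneg _ \<Omega>(1) _ _ _ _ _ _ \<eta> \<tau> \<delta> small])
      auto
qed

theorem proposition1:
  fixes c :: "nat \<Rightarrow> real" and K0 \<delta> \<epsilon> :: real
  assumes "K0 \<ge> 1" and "\<delta> > 0" and "\<epsilon> > 0"
  shows "\<exists>M::nat. \<exists>\<eta>::real. 0 < \<eta> \<and> \<eta> < 1/2 \<and>
    (\<forall>(N::nat) (f1::int \<Rightarrow> real) (f2::int \<Rightarrow> real).
      N \<ge> 1 \<longrightarrow> (\<forall>n\<in>{0..<int N}. 0 \<le> f1 n \<and> 0 \<le> f2 n) \<longrightarrow>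
      (\<exists>\<Omega>. \<Omega> \<subseteq> {0..<int N} \<and> 1 mod int N \<in> \<Omega> \<and> card \<Omega> \<le> M \<and>
        (\<forall>chi::int \<Rightarrow> real.
          (\<forall>n. 0 \<le> chi n \<and> chi n \<le> c (card \<Omega>)) \<longrightarrow>
          (\<forall>n. chi n = chi (- n)) \<longrightarrow>
          (\<forall>n. chi (n + int N) = chi n) \<longrightarrow>
          (\<forall>n. n mod int N \<in> bohr N \<Omega> \<eta> \<longrightarrow> chi n \<ge> 1) \<longrightarrow>
          (\<forall>n. n mod int N \<notin> bohr N \<Omega> (2 * \<eta>) \<longrightarrow> chi n \<le> (\<eta>\<^sup>2 / 8) ^ card \<Omega>) \<longrightarrow>
          norm1 N chi \<ge> (\<eta> / 2) ^ card \<Omega> \<longrightarrow>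
          (\<forall>t::int. real N / 3 < of_int t \<and> of_int t < 2 * real N / 3 \<longrightarrow>
              conv N f2 chi t \<ge> \<delta> * norm1 N chi) \<longrightarrow>
          (\<Sum>n\<in>{n::int. real N / 3 < of_int n \<and> of_int n < real N / 2}. f1 n) \<ge> \<delta> * real N \<longrightarrow>
          (\<forall>f\<in>{f1, f2}. \<forall>r\<in>{3::nat, 4}.
              (\<Sum>\<xi>\<in>{0..<int N}. norm (fourier N f \<xi>) ^ r) \<le> K0) \<longrightarrow>
          real (card {n::int. 0.9 * real N \<le> of_int n \<and> n \<le> int N \<and>
                          conv N f1 f2 n < \<delta>\<^sup>2 / 3}) \<le> \<epsilon> * real N)))"
proof -
  obtain \<eta> \<tau> where \<eta>: "0 < \<eta>" "\<eta> \<le> 1/4" and \<tau>: "0 < \<tau>"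
    and small: "289 * \<eta>\<^sup>2 * K0 + 4 * \<tau> * K0 \<le> 4 * \<delta> ^ 4 * \<epsilon> / 9"
    using exists_smoothing_parameters assms by blast
  show ?thesis
    using \<eta> \<tau> small \<open>\<delta> > 0\<close>
    by (intro exI[of _ "nat \<lceil>2 * K0 / \<tau> ^ 3\<rceil> + 1"] exI[of _ \<eta>] conjI allI impI
        proposition1_for_parameters) auto
qed

end
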